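(* Let $R$ be a commutative domain, $B=R(t,\sigma,H,J)$, assume $\sigma^n=\mathrm{id}_R$, let $\mathcal O$ be a $\sigma$-orbit in $\operatorname{Maxspec}(R)$ of size $n$ containing no breaks, and let $\mathfrak m\in\mathcal O$. (1) If $N$ is a $\Lambda_n/(\mathfrak m)$-module, there is an invertible $R/\mathfrak m$-linear map $\theta\in\operatorname{Aut}_{R/\mathfrak m}(N)$ such that for all $a\in I^{(n)}$ and $b\in I^{(-n)}$, $at^n$ acts on $N$ as $\bar a\theta$ and $bt^{-n}$ acts as $\bar b\theta^{-1}$, where $\bar a,\bar b$ denote images in $R/\mathfrak m$ (so these act as $0$ when $a\in\mathfrak m$, resp. $b\in\mathfrak m$). (2) Conversely, if $N$ is an $R/\mathfrak m$-vector space and $\theta\in\operatorname{Aut}_{R/\mathfrak m}(N)$, then setting $R$ to act through $R/\mathfrak m$, $at^n\mapsto\bar a\theta$ and $bt^{-n}\mapsto\bar b\theta^{-1}$ defines a $\Lambda_n/(\mathfrak m)$-module structure on $N$. (3) Such an $N$ is a simple $\Lambda_n/(\mathfrak m)$-module if and only if $N$ has no $\theta$-invariant subspaces other than $0$ and $N$.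
   Context: $\Bbbk$ is a field; all algebras are associative unital $\Bbbk$-algebras. For an algebra $R$ and $\sigma\in\operatorname{Aut}_\Bbbk(R)$, $R[t,t^{-1};\sigma]$ is the skew Laurent ring: generated over $R$ by $t,t^{-1}$ with $tt^{-1}=t^{-1}t=1$ and $t^{\pm1}r=\sigma^{\pm1}(r)t^{\pm1}$ for $r\in R$. Given two-sided ideals $H,J$ of $R$, set $I^{(0)}=R$, $I^{(n)}=J\sigma(J)\cdots\sigma^{n-1}(J)$ for $n\ge1$, and $I^{(n)}=\sigma^{-1}(H)\sigma^{-2}(H)\cdots\sigma^{n}(H)$ for $n\le-1$; it is assumed throughout that $I^{(n)}\neq0$ for all $n\in\mathbb Z$. The Bell–Rogalski (BR) algebra is $R(t,\sigma,H,J)=\bigoplus_{n\in\mathbb Z}I^{(n)}t^n\subseteq R[t,t^{-1};\sigma]$; $B_k=I^{(k)}t^k$. For $R$ commutative, $\mathcal S(B)=\{\mathfrak p\in\operatorname{Spec}(R):\mathfrak p\supseteq HJ\}$; a maximal ideal $\mathfrak m$ is a break if $\sigma(\mathfrak m)\in\mathcal S(B)$. $\sigma$-orbits are orbits of $k\cdot\mathfrak m=\sigma^k(\mathfrak m)$ on $\operatorname{Maxspec}(R)$. With $\sigma^n=\mathrm{id}$: $\Lambda_n=\bigoplus_{k\in\mathbb Z}B_{kn}$; for $\mathfrak m\in\mathcal O$, $(\mathfrak m)=\mathfrak m\Lambda_n=\Lambda_n\mathfrak m$ is a two-sided ideal of $\Lambda_n$. *)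

theory Defs
  imports Main
begin

definition is_ideal :: "'a::comm_ring_1 set \<Rightarrow> bool" where
  "is_ideal I \<longleftrightarrow> 0 \<in> I \<and> (\<forall>a\<in>I. \<forall>b\<in>I. a + b \<in> I) \<and> (\<forall>a\<in>I. - a \<in> I)
     \<and> (\<forall>r a. a \<in> I \<longrightarrow> r * a \<in> I)"

definition maximal_ideal :: "'a::comm_ring_1 set \<Rightarrow> bool" where
  "maximal_ideal M \<longleftrightarrow> is_ideal M \<and> M \<noteq> UNIV \<and>
     (\<forall>K. is_ideal K \<and> M \<subseteq> K \<longrightarrow> K = M \<or> K = UNIV)"

definition prime_ideal :: "'a::comm_ring_1 set \<Rightarrow> bool" where
  "prime_ideal P \<longleftrightarrow> is_ideal P \<and> P \<noteq> UNIV \<and> (\<forall>a b. a * b \<in> P \<longrightarrow> a \<in> P \<or> b \<in> P)"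

definition ideal_prod :: "'a::comm_ring_1 set \<Rightarrow> 'a set \<Rightarrow> 'a set" where
  "ideal_prod I J = \<Inter>{K. is_ideal K \<and> (\<forall>a\<in>I. \<forall>b\<in>J. a * b \<in> K)}"

definition ring_hom_map :: "('k::field \<Rightarrow> 'a::comm_ring_1) \<Rightarrow> bool" where
  "ring_hom_map \<iota> \<longleftrightarrow> (\<forall>x y. \<iota> (x + y) = \<iota> x + \<iota> y) \<and> (\<forall>x y. \<iota> (x * y) = \<iota> x * \<iota> y) \<and> \<iota> 1 = 1"

definition ring_aut :: "('a::comm_ring_1 \<Rightarrow> 'a) \<Rightarrow> bool" where
  "ring_aut \<sigma> \<longleftrightarrow> bij \<sigma> \<and> (\<forall>x y. \<sigma> (x + y) = \<sigma> x + \<sigma> y) \<and> (\<forall>x y. \<sigma> (x * y) = \<sigma> x * \<sigma> y) \<and> \<sigma> 1 = 1"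

definition spow :: "('a \<Rightarrow> 'a) \<Rightarrow> int \<Rightarrow> 'a \<Rightarrow> 'a" where
  "spow \<sigma> k = (if 0 \<le> k then \<sigma> ^^ nat k else (inv \<sigma>) ^^ nat (- k))"

fun Ipos :: "('a::comm_ring_1 \<Rightarrow> 'a) \<Rightarrow> 'a set \<Rightarrow> nat \<Rightarrow> 'a set" where
  "Ipos \<sigma> J 0 = UNIV"
| "Ipos \<sigma> J (Suc k) = ideal_prod (Ipos \<sigma> J k) ((\<sigma> ^^ k) ` J)"

fun Ineg :: "('a::comm_ring_1 \<Rightarrow> 'a) \<Rightarrow> 'a set \<Rightarrow> nat \<Rightarrow> 'a set" where
  "Ineg \<sigma> H 0 = UNIV"
| "Ineg \<sigma> H (Suc k) = ideal_prod (Ineg \<sigma> H k) (spow \<sigma> (- (int k + 1)) ` H)"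

text \<open>I^(k): J sigma(J)...sigma^(k-1)(J) for k>=1, R for k=0,
  sigma^-1(H)...sigma^k(H) for k<=-1.\<close>
definition BR_I :: "('a::comm_ring_1 \<Rightarrow> 'a) \<Rightarrow> 'a set \<Rightarrow> 'a set \<Rightarrow> int \<Rightarrow> 'a set" where
  "BR_I \<sigma> H J k = (if 0 \<le> k then Ipos \<sigma> J (nat k) else Ineg \<sigma> H (nat (- k)))"

definition SB :: "'a::comm_ring_1 set \<Rightarrow> 'a set \<Rightarrow> 'a set set" where
  "SB H J = {P. prime_ideal P \<and> ideal_prod H J \<subseteq> P}"

definition is_break :: "('a::comm_ring_1 \<Rightarrow> 'a) \<Rightarrow> 'a set \<Rightarrow> 'a set \<Rightarrow> 'a set \<Rightarrow> bool" where
  "is_break \<sigma> H J M \<longleftrightarrow> maximal_ideal M \<and> \<sigma> ` M \<in> SB H J"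

definition sigma_orbit :: "('a \<Rightarrow> 'a) \<Rightarrow> 'a set \<Rightarrow> 'a set set" where
  "sigma_orbit \<sigma> M = {spow \<sigma> k ` M | k. True}"

text \<open>An element sum_k f(k) t^k is represented by a finitely supported f :: int => R.\<close>
definition finsupp :: "(int \<Rightarrow> 'a::zero) \<Rightarrow> bool" where
  "finsupp f \<longleftrightarrow> finite {k. f k \<noteq> 0}"

text \<open>(a t^i)(b t^j) = a sigma^i(b) t^(i+j).\<close>
definition skew_mult :: "('a::comm_ring_1 \<Rightarrow> 'a) \<Rightarrow> (int \<Rightarrow> 'a) \<Rightarrow> (int \<Rightarrow> 'a) \<Rightarrow> int \<Rightarrow> 'a" where
  "skew_mult \<sigma> f g = (\<lambda>k. \<Sum>i\<in>{i. f i \<noteq> 0}. f i * spow \<sigma> i (g (k - i)))"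

definition skew_add :: "(int \<Rightarrow> 'a::comm_ring_1) \<Rightarrow> (int \<Rightarrow> 'a) \<Rightarrow> int \<Rightarrow> 'a" where
  "skew_add f g = (\<lambda>k. f k + g k)"

definition tmono :: "int \<Rightarrow> 'a::zero \<Rightarrow> int \<Rightarrow> 'a" where
  "tmono k a = (\<lambda>j. if j = k then a else 0)"

text \<open>Lambda_n = direct sum of B_(kn) = I^(kn) t^(kn) inside the skew Laurent ring.\<close>
definition Lambda :: "('a::comm_ring_1 \<Rightarrow> 'a) \<Rightarrow> 'a set \<Rightarrow> 'a set \<Rightarrow> nat \<Rightarrow> (int \<Rightarrow> 'a) set" where
  "Lambda \<sigma> H J n = {f. finsupp f \<and> (\<forall>k. f k \<in> BR_I \<sigma> H J k) \<and> (\<forall>k. \<not> int n dvd k \<longrightarrow> f k = 0)}"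

inductive_set ext_ideal :: "('a::comm_ring_1 \<Rightarrow> 'a) \<Rightarrow> 'a set \<Rightarrow> 'a set \<Rightarrow> nat \<Rightarrow> 'a set \<Rightarrow> (int \<Rightarrow> 'a) set"
  for \<sigma> H J n M where
  zero: "(\<lambda>_. 0) \<in> ext_ideal \<sigma> H J n M"
| gen: "x \<in> M \<Longrightarrow> f \<in> Lambda \<sigma> H J n \<Longrightarrow> skew_mult \<sigma> (tmono 0 x) f \<in> ext_ideal \<sigma> H J n M"
| add: "a \<in> ext_ideal \<sigma> H J n M \<Longrightarrow> b \<in> ext_ideal \<sigma> H J n M \<Longrightarrow> skew_add a b \<in> ext_ideal \<sigma> H J n M"

definition Lambda_module :: "('a::comm_ring_1 \<Rightarrow> 'a) \<Rightarrow> 'a set \<Rightarrow> 'a set \<Rightarrow> nat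
    \<Rightarrow> ((int \<Rightarrow> 'a) \<Rightarrow> 'v::ab_group_add \<Rightarrow> 'v) \<Rightarrow> bool" where
  "Lambda_module \<sigma> H J n act \<longleftrightarrow>
     (\<forall>v. act (tmono 0 1) v = v) \<and>
     (\<forall>f\<in>Lambda \<sigma> H J n. \<forall>g\<in>Lambda \<sigma> H J n. \<forall>v. act (skew_add f g) v = act f v + act g v) \<and>
     (\<forall>f\<in>Lambda \<sigma> H J n. \<forall>v w. act f (v + w) = act f v + act f w) \<and>
     (\<forall>f\<in>Lambda \<sigma> H J n. \<forall>g\<in>Lambda \<sigma> H J n. \<forall>v. act (skew_mult \<sigma> f g) v = act f (act g v))"

text \<open>A Lambda_n/(M)-module: a Lambda_n-module annihilated by the ideal (M).\<close>
definition quot_module :: "('a::comm_ring_1 \<Rightarrow> 'a) \<Rightarrow> 'a set \<Rightarrow> 'a set \<Rightarrow> nat \<Rightarrow> 'a set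
    \<Rightarrow> ((int \<Rightarrow> 'a) \<Rightarrow> 'v::ab_group_add \<Rightarrow> 'v) \<Rightarrow> bool" where
  "quot_module \<sigma> H J n M act \<longleftrightarrow> Lambda_module \<sigma> H J n act \<and>
     (\<forall>f\<in>ext_ideal \<sigma> H J n M. \<forall>v. act f v = 0)"

definition submodule :: "('a::comm_ring_1 \<Rightarrow> 'a) \<Rightarrow> 'a set \<Rightarrow> 'a set \<Rightarrow> nat
    \<Rightarrow> ((int \<Rightarrow> 'a) \<Rightarrow> 'v::ab_group_add \<Rightarrow> 'v) \<Rightarrow> 'v set \<Rightarrow> bool" where
  "submodule \<sigma> H J n act W \<longleftrightarrow> 0 \<in> W \<and> (\<forall>v\<in>W. \<forall>w\<in>W. v + w \<in> W) \<and> (\<forall>v\<in>W. - v \<in> W) \<and>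
     (\<forall>f\<in>Lambda \<sigma> H J n. \<forall>v\<in>W. act f v \<in> W)"

definition simple_module :: "('a::comm_ring_1 \<Rightarrow> 'a) \<Rightarrow> 'a set \<Rightarrow> 'a set \<Rightarrow> nat
    \<Rightarrow> ((int \<Rightarrow> 'a) \<Rightarrow> 'v::ab_group_add \<Rightarrow> 'v) \<Rightarrow> bool" where
  "simple_module \<sigma> H J n act \<longleftrightarrow> (\<exists>v::'v. v \<noteq> 0) \<and>
     (\<forall>W. submodule \<sigma> H J n act W \<longrightarrow> W = {0} \<or> W = UNIV)"

text \<open>An R/M-vector space, i.e. an R-module on 'v annihilated by M.\<close>
definition RM_space :: "'a::comm_ring_1 set \<Rightarrow> ('a \<Rightarrow> 'v::ab_group_add \<Rightarrow> 'v) \<Rightarrow> bool" where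
  "RM_space M rmul \<longleftrightarrow>
     (\<forall>v. rmul 1 v = v) \<and> (\<forall>a b v. rmul (a + b) v = rmul a v + rmul b v) \<and>
     (\<forall>a v w. rmul a (v + w) = rmul a v + rmul a w) \<and>
     (\<forall>a b v. rmul (a * b) v = rmul a (rmul b v)) \<and> (\<forall>x\<in>M. \<forall>v. rmul x v = 0)"

definition lin_aut :: "('a \<Rightarrow> 'v::ab_group_add \<Rightarrow> 'v) \<Rightarrow> ('v \<Rightarrow> 'v) \<Rightarrow> bool" where
  "lin_aut rmul \<theta> \<longleftrightarrow> bij \<theta> \<and> (\<forall>v w. \<theta> (v + w) = \<theta> v + \<theta> w) \<and> (\<forall>r v. \<theta> (rmul r v) = rmul r (\<theta> v))"

definition subspace :: "('a \<Rightarrow> 'v::ab_group_add \<Rightarrow> 'v) \<Rightarrow> 'v set \<Rightarrow> bool" where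
  "subspace rmul W \<longleftrightarrow> 0 \<in> W \<and> (\<forall>v\<in>W. \<forall>w\<in>W. v + w \<in> W) \<and> (\<forall>v\<in>W. - v \<in> W) \<and>
     (\<forall>r. \<forall>v\<in>W. rmul r v \<in> W)"

definition theta_acts :: "('a::comm_ring_1 \<Rightarrow> 'a) \<Rightarrow> 'a set \<Rightarrow> 'a set \<Rightarrow> nat
    \<Rightarrow> ((int \<Rightarrow> 'a) \<Rightarrow> 'v::ab_group_add \<Rightarrow> 'v) \<Rightarrow> ('a \<Rightarrow> 'v \<Rightarrow> 'v) \<Rightarrow> ('v \<Rightarrow> 'v) \<Rightarrow> bool" where
  "theta_acts \<sigma> H J n act rmul \<theta> \<longleftrightarrow>
     (\<forall>a\<in>BR_I \<sigma> H J (int n). \<forall>v. act (tmono (int n) a) v = rmul a (\<theta> v)) \<and>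
     (\<forall>b\<in>BR_I \<sigma> H J (- int n). \<forall>v. act (tmono (- int n) b) v = rmul b (inv \<theta> v))"

end

theory Submission
  imports Defs
begin

text \<open>
  The absence of breaks on the orbit gives u \<in> I^(n) and u' \<in> I^(-n) with u \<equiv> u' \<equiv> 1 mod M.
  On a \<Lambda>_n/(M)-module, \<theta> := u t^n is an R/M-linear automorphism with inverse u' t^(-n), and every
  a t^(kn) acts as a \<theta>^k; conversely this formula defines a \<Lambda>_n/(M)-module for every \<theta>, since
  \<sigma>^n = id makes t^n central. Hence the submodules are the subspaces stable under \<theta> and \<theta>^(-1).
  In a simple module every \<theta>-stable subspace is also \<theta>^(-1)-stable: the submodule generated by
  (1 + \<theta>) w is either 0, so that \<theta>^(-1) w = -w, or contains w, which yields a relation p(\<theta>) w = 0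
  for a Laurent polynomial p with p(-1) = 1; solving it for its lowest unit coefficient puts
  \<theta>^(-1) w into the \<theta>-stable span of w.
\<close>

lemma is_idealD:
  assumes "is_ideal I"
  shows "0 \<in> I" "\<And>a b. a \<in> I \<Longrightarrow> b \<in> I \<Longrightarrow> a + b \<in> I" "\<And>a. a \<in> I \<Longrightarrow> - a \<in> I"
    "\<And>r a. a \<in> I \<Longrightarrow> r * a \<in> I" "\<And>r a. a \<in> I \<Longrightarrow> a * r \<in> I"
    "\<And>a b. a \<in> I \<Longrightarrow> b \<in> I \<Longrightarrow> a - b \<in> I"
  using assms unfolding is_ideal_def by (auto simp: mult.commute) (metis diff_conv_add_uminus)

lemma is_ideal_sum: "is_ideal I \<Longrightarrow> (\<And>x. x \<in> S \<Longrightarrow> f x \<in> I) \<Longrightarrow> sum f S \<in> I"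
  by (induction S rule: infinite_finite_induct) (auto intro: is_idealD)

lemma is_ideal_ideal_prod: "is_ideal (ideal_prod A B)"
  unfolding ideal_prod_def is_ideal_def by auto

lemma ideal_prod_memI: "a \<in> A \<Longrightarrow> b \<in> B \<Longrightarrow> a * b \<in> ideal_prod A B"
  unfolding ideal_prod_def by auto

lemma ideal_prod_least: "is_ideal K \<Longrightarrow> (\<And>a b. a \<in> A \<Longrightarrow> b \<in> B \<Longrightarrow> a * b \<in> K) \<Longrightarrow> ideal_prod A B \<subseteq> K"
  unfolding ideal_prod_def by auto

lemma ideal_prod_subset_ideal: "is_ideal K \<Longrightarrow> A \<subseteq> K \<or> B \<subseteq> K \<Longrightarrow> ideal_prod A B \<subseteq> K"
  by (rule ideal_prod_least) (auto intro: is_idealD)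

lemma ideal_prod_subset_left: "is_ideal A \<Longrightarrow> ideal_prod A B \<subseteq> A"
  by (simp add: ideal_prod_subset_ideal)

lemma maximal_ideal_is_ideal: "maximal_ideal M \<Longrightarrow> is_ideal M"
  by (simp add: maximal_ideal_def)

lemma one_notin_maximal_ideal: "maximal_ideal M \<Longrightarrow> (1::'a::comm_ring_1) \<notin> M"
  unfolding maximal_ideal_def using is_idealD(4)[of M 1] by (metis UNIV_eq_I mult.right_neutral)

lemma maximal_ideal_inverse:
  fixes M :: "'a::comm_ring_1 set"
  assumes M: "maximal_ideal M" and a: "a \<notin> M"
  shows "\<exists>c. c * a - 1 \<in> M"
proof -
  define K where "K = {m + r * a | m r. m \<in> M}"
  have IM: "is_ideal M" using M by (rule maximal_ideal_is_ideal)
  have K_memI: "m + r * a \<in> K" if "m \<in> M" for m r using that unfolding K_def by blast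
  have K_memE: "\<exists>m r. x = m + r * a \<and> m \<in> M" if "x \<in> K" for x using that unfolding K_def by blast
  have "is_ideal K"
    unfolding is_ideal_def
  proof (intro conjI ballI allI impI)
    show "0 \<in> K" using K_memI[OF is_idealD(1)[OF IM], of 0] by simp
    fix x y assume "x \<in> K" "y \<in> K"
    then obtain m1 r1 m2 r2 where "x = m1 + r1 * a" "y = m2 + r2 * a" "m1 \<in> M" "m2 \<in> M"
      using K_memE by metis
    then show "x + y \<in> K"
      using K_memI[OF is_idealD(2)[OF IM], of m1 m2 "r1 + r2"] by (simp add: algebra_simps)
  next
    fix x assume "x \<in> K"
    then obtain m r where "x = m + r * a" "m \<in> M" using K_memE by metis
    then show "- x \<in> K" using K_memI[OF is_idealD(3)[OF IM], of m "- r"] by simp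
  next
    fix s x assume "x \<in> K"
    then obtain m r where "x = m + r * a" "m \<in> M" using K_memE by metis
    then show "s * x \<in> K"
      using K_memI[OF is_idealD(4)[OF IM], of m s "s * r"] by (simp add: algebra_simps)
  qed
  moreover have "M \<subseteq> K" using K_memI[of _ 0] by auto
  moreover have "a \<in> K" using K_memI[OF is_idealD(1)[OF IM], of 1] by simp
  ultimately have "1 \<in> K" using M a unfolding maximal_ideal_def by blast
  then obtain m r where "1 = m + r * a" "m \<in> M" using K_memE by metis
  then have "r * a - 1 = - m" "- m \<in> M" using is_idealD(3)[OF IM] by (auto simp: algebra_simps)
  then show ?thesis by metis
qed

lemma ideal_not_subset_maximal_one_mod:
  assumes M: "maximal_ideal M" and I: "is_ideal I" "\<not> I \<subseteq> M"
  shows "\<exists>a \<in> I. a - 1 \<in> M"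
proof -
  obtain b where "b \<in> I" "b \<notin> M" using I by blast
  moreover obtain c where "c * b - 1 \<in> M" using maximal_ideal_inverse[OF M \<open>b \<notin> M\<close>] by blast
  ultimately show ?thesis using is_idealD(4)[OF I(1)] by blast
qed

lemma is_ideal_one_mod_mult:
  assumes "is_ideal M" "x - 1 \<in> M" "y - 1 \<in> M"
  shows "x * y - 1 \<in> M"
proof -
  have "(x - 1) * y + (y - 1) \<in> M" using is_idealD(2,5)[OF assms(1)] assms(2,3) by blast
  moreover have "(x - 1) * y + (y - 1) = x * y - 1" by (simp add: algebra_simps)
  ultimately show ?thesis by (simp only:)
qed

lemma maximal_ideal_prime:
  fixes M :: "'a::comm_ring_1 set"
  assumes M: "maximal_ideal M" and "a * b \<in> M" "a \<notin> M"
  shows "b \<in> M"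
proof -
  obtain c where c: "c * a - 1 \<in> M" using maximal_ideal_inverse M assms(3) by blast
  have "b = c * (a * b) - (c * a - 1) * b" by (simp add: algebra_simps)
  then show ?thesis using is_idealD[OF maximal_ideal_is_ideal[OF M]] assms(2) c by metis
qed

lemma maximal_imp_prime_ideal: "maximal_ideal M \<Longrightarrow> prime_ideal M"
  unfolding prime_ideal_def using maximal_ideal_prime[of M]
  by (auto simp: maximal_ideal_def)

lemma ideal_prod_not_subset_maximal:
  assumes "maximal_ideal M" "\<not> A \<subseteq> M" "\<not> B \<subseteq> M"
  shows "\<not> ideal_prod A B \<subseteq> M"
  using assms ideal_prod_memI maximal_ideal_prime by blast

lemma ring_autD:
  assumes "ring_aut \<tau>"
  shows "bij \<tau>" "\<tau> (x + y) = \<tau> x + \<tau> y" "\<tau> (x * y) = \<tau> x * \<tau> y" "\<tau> 1 = 1"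
  using assms by (simp_all add: ring_aut_def)

lemma ring_aut_zero: "ring_aut \<tau> \<Longrightarrow> \<tau> 0 = 0"
  using ring_autD(2)[of \<tau> 0 0] by simp

lemma ring_aut_uminus: "ring_aut \<tau> \<Longrightarrow> \<tau> (- x) = - \<tau> x"
  using ring_autD(2)[of \<tau> x "- x"] ring_aut_zero[of \<tau>] by (metis add.right_inverse minus_unique)

lemma ring_aut_funpow: "ring_aut \<tau> \<Longrightarrow> ring_aut (\<tau> ^^ k)"
  by (induction k) (auto simp: ring_aut_def intro: bij_comp)

lemma is_ideal_vimage_ring_aut: "ring_aut \<tau> \<Longrightarrow> is_ideal K \<Longrightarrow> is_ideal (\<tau> -` K)"
  unfolding is_ideal_def by (auto simp: ring_autD ring_aut_zero ring_aut_uminus)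

lemma is_ideal_image_ring_aut:
  assumes \<tau>: "ring_aut \<tau>" and P: "is_ideal P"
  shows "is_ideal (\<tau> ` P)"
  unfolding is_ideal_def
proof (intro conjI ballI allI impI)
  show "0 \<in> \<tau> ` P" using ring_aut_zero[OF \<tau>] is_idealD(1)[OF P] by (metis image_eqI)
  fix x y assume "x \<in> \<tau> ` P" "y \<in> \<tau> ` P"
  then obtain a b where "x = \<tau> a" "y = \<tau> b" "a \<in> P" "b \<in> P" by blast
  then show "x + y \<in> \<tau> ` P" using ring_autD(2)[OF \<tau>] is_idealD(2)[OF P] by (metis image_eqI)
next
  fix x assume "x \<in> \<tau> ` P"
  then obtain a where "x = \<tau> a" "a \<in> P" by blast
  then show "- x \<in> \<tau> ` P" using ring_aut_uminus[OF \<tau>] is_idealD(3)[OF P] by (metis image_eqI)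
next
  fix r x assume "x \<in> \<tau> ` P"
  then obtain a where "x = \<tau> a" "a \<in> P" by blast
  moreover obtain s where "r = \<tau> s" using ring_autD(1)[OF \<tau>] by (metis bij_pointE)
  ultimately show "r * x \<in> \<tau> ` P" using ring_autD(3)[OF \<tau>] is_idealD(4)[OF P] by (metis image_eqI)
qed

lemma maximal_ideal_image_ring_aut:
  assumes \<tau>: "ring_aut \<tau>" and P: "maximal_ideal P"
  shows "maximal_ideal (\<tau> ` P)"
  unfolding maximal_ideal_def
proof (intro conjI allI impI)
  have surj: "surj \<tau>" and inj: "inj \<tau>" using ring_autD(1)[OF \<tau>] by (auto simp: bij_def)
  show "is_ideal (\<tau> ` P)" by (rule is_ideal_image_ring_aut[OF \<tau> maximal_ideal_is_ideal[OF P]])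
  show "\<tau> ` P \<noteq> UNIV"
    using one_notin_maximal_ideal[OF P] ring_autD(4)[OF \<tau>] inj by (metis UNIV_I inj_image_mem_iff)
  fix K assume K: "is_ideal K \<and> \<tau> ` P \<subseteq> K"
  then have "\<tau> -` K = P \<or> \<tau> -` K = UNIV"
    using P is_ideal_vimage_ring_aut[OF \<tau>] unfolding maximal_ideal_def by blast
  then show "K = \<tau> ` P \<or> K = UNIV" using surj_image_vimage_eq[OF surj, of K] surj by metis
qed

lemma funpow_mod_period: "f ^^ n = id \<Longrightarrow> f ^^ m = f ^^ (m mod n)"
  using funpow_mod_eq[where f=f and n=n] by (auto simp: fun_eq_iff)

lemma inv_eq_funpow_period:
  assumes "0 < n" "f ^^ n = id"
  shows "inv f = f ^^ (n - 1)"
proof (rule inv_unique_comp)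
  show "f \<circ> f ^^ (n - 1) = id" using assms by (metis Suc_diff_1 funpow.simps(2))
  show "f ^^ (n - 1) \<circ> f = id" using assms by (metis Suc_diff_1 funpow_Suc_right)
qed

lemma spow_mod_period:
  assumes n: "0 < n" and period: "f ^^ n = id"
  shows "spow f k = f ^^ nat (k mod int n)"
proof (cases "0 \<le> k")
  case True
  then have "nat (k mod int n) = nat k mod n" by (simp add: nat_mod_distrib)
  then show ?thesis using True funpow_mod_period[OF period, of "nat k"] by (simp add: spow_def)
next
  case False
  have "int ((n - 1) * nat (- k)) = k + (- k) * int n" using False n by (simp add: of_nat_diff algebra_simps)
  then have "int ((n - 1) * nat (- k)) mod int n = k mod int n" by (metis mod_mult_self1)
  then have "(n - 1) * nat (- k) mod n = nat (k mod int n)" by (metis nat_int zmod_int)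
  moreover have "spow f k = f ^^ ((n - 1) * nat (- k))"
    using False by (simp add: spow_def inv_eq_funpow_period[OF n period] funpow_mult mult.commute)
  ultimately show ?thesis using funpow_mod_period[OF period] by metis
qed

lemma spow_0 [simp]: "spow f 0 = id"
  by (simp add: spow_def)

lemma spow_1: "spow f 1 = f"
  by (simp add: spow_def)

lemma spow_minus_1: "spow f (- 1) = inv f"
  by (simp add: spow_def)

lemma spow_nonneg: "0 \<le> k \<Longrightarrow> spow f k = f ^^ nat k"
  by (simp add: spow_def)

lemma spow_of_nat: "spow f (int m) = f ^^ m"
  by (simp add: spow_def)

lemma spow_succ:
  assumes "bij f"
  shows "spow f (k + 1) x = f (spow f k x)"
proof -
  consider "0 \<le> k" | "k = -1" | "k < -1" by linarith
  then show ?thesis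
  proof cases
    case 1
    then have "nat (k + 1) = Suc (nat k)" by simp
    then show ?thesis using 1 by (simp add: spow_def)
  next
    case 2
    then show ?thesis using assms by (simp add: spow_def bij_is_surj surj_f_inv_f)
  next
    case 3
    then have "nat (- k) = Suc (nat (- (k + 1)))" by simp
    then show ?thesis using 3 assms by (simp add: spow_def bij_is_surj surj_f_inv_f)
  qed
qed

lemma spow_pred:
  assumes "bij f"
  shows "spow f (k - 1) x = inv f (spow f k x)"
  using spow_succ[OF assms, of "k - 1" x] assms by (simp add: bij_is_inj inv_f_f)

lemma spow_add:
  assumes "bij f"
  shows "spow f (a + b) x = spow f a (spow f b x)"
proof (induction a rule: int_induct[where k=0])
  case (step1 i)
  then show ?case using spow_succ[OF assms, of "i + b"] spow_succ[OF assms, of i] by (simp add: ac_simps)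
next
  case (step2 i)
  then show ?case using spow_pred[OF assms, of "i + b"] spow_pred[OF assms, of i] by (simp add: algebra_simps)
qed simp

lemma spow_image_subset:
  assumes "f ` W \<subseteq> W" "inv f ` W \<subseteq> W"
  shows "spow f k ` W \<subseteq> W"
proof -
  have "(g ^^ m) ` W \<subseteq> W" if "g ` W \<subseteq> W" for g :: "'a \<Rightarrow> 'a" and m
    using that by (induction m) (auto simp: image_comp [symmetric] image_subset_iff)
  then show ?thesis using assms by (simp add: spow_def)
qed

section \<open>Orbits without breaks\<close>

lemma is_ideal_BR_I: "is_ideal (BR_I \<sigma> H J k)"
proof -
  have "is_ideal (UNIV :: 'a set)" by (simp add: is_ideal_def)
  then have "is_ideal (Ipos \<sigma> J m)" "is_ideal (Ineg \<sigma> H m)" for m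
    by (cases m; simp add: is_ideal_ideal_prod)+
  then show ?thesis by (simp add: BR_I_def)
qed

lemma BR_I_of_nat: "BR_I \<sigma> H J (int m) = Ipos \<sigma> J m"
  by (simp add: BR_I_def)

lemma BR_I_uminus_of_nat: "BR_I \<sigma> H J (- int m) = Ineg \<sigma> H m"
  by (auto simp: BR_I_def)

lemma Ipos_antimono: "k \<le> l \<Longrightarrow> Ipos \<sigma> J l \<subseteq> Ipos \<sigma> J k"
  by (rule lift_Suc_antimono_le[of "Ipos \<sigma> J"])
    (metis BR_I_of_nat Ipos.simps(2) ideal_prod_subset_left is_ideal_BR_I)

lemma Ineg_antimono: "k \<le> l \<Longrightarrow> Ineg \<sigma> H l \<subseteq> Ineg \<sigma> H k"
  by (rule lift_Suc_antimono_le[of "Ineg \<sigma> H"])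
    (metis BR_I_uminus_of_nat Ineg.simps(2) ideal_prod_subset_left is_ideal_BR_I)

lemma sigma_orbit_funpow:
  assumes "0 < n" "\<sigma> ^^ n = id" "P \<in> sigma_orbit \<sigma> M0"
  shows "\<exists>i. P = (\<sigma> ^^ i) ` M0"
  using assms spow_mod_period[OF assms(1,2)] by (auto simp: sigma_orbit_def)

lemma sigma_orbit_closed:
  assumes "0 < n" "\<sigma> ^^ n = id" "P \<in> sigma_orbit \<sigma> M0"
  shows "(\<sigma> ^^ j) ` P \<in> sigma_orbit \<sigma> M0"
proof -
  obtain i where "P = (\<sigma> ^^ i) ` M0" using sigma_orbit_funpow[OF assms] by blast
  then have "(\<sigma> ^^ j) ` P = (\<sigma> ^^ (j + i)) ` M0" by (simp add: funpow_add image_comp)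
  then have "(\<sigma> ^^ j) ` P = spow \<sigma> (int (j + i)) ` M0" by (simp only: spow_of_nat)
  then show ?thesis by (auto simp: sigma_orbit_def)
qed

lemma no_break_orbit_not_above:
  assumes aut: "ring_aut \<sigma>" and n: "0 < n" and period: "\<sigma> ^^ n = id"
    and M0: "maximal_ideal M0" and nobreak: "\<forall>P \<in> sigma_orbit \<sigma> M0. \<not> is_break \<sigma> H J P"
    and M: "M \<in> sigma_orbit \<sigma> M0"
  shows "\<not> H \<subseteq> (\<sigma> ^^ m) ` M" "\<not> J \<subseteq> (\<sigma> ^^ m) ` M"
proof -
  have maximal: "maximal_ideal P" if "P \<in> sigma_orbit \<sigma> M0" for P
    using sigma_orbit_funpow[OF n period that] maximal_ideal_image_ring_aut[OF ring_aut_funpow[OF aut] M0]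
    by blast
  define P where "P = (\<sigma> ^^ (m + n - 1)) ` M"
  have P: "P \<in> sigma_orbit \<sigma> M0" unfolding P_def by (rule sigma_orbit_closed[OF n period M])
  have "\<sigma> ` P = (\<sigma> ^^ Suc (m + n - 1)) ` M" by (simp add: P_def image_comp)
  also have "\<dots> = (\<sigma> ^^ (m + n)) ` M" using n by simp
  also have "\<dots> = (\<sigma> ^^ m) ` M" by (simp add: funpow_add period)
  finally have \<sigma>P: "\<sigma> ` P = (\<sigma> ^^ m) ` M" .
  have "\<not> ideal_prod H J \<subseteq> (\<sigma> ^^ m) ` M"
  proof
    assume "ideal_prod H J \<subseteq> (\<sigma> ^^ m) ` M"
    then have "is_break \<sigma> H J P"
      using maximal[OF P] maximal_imp_prime_ideal[OF maximal_ideal_image_ring_aut[OF aut maximal[OF P]]]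
      by (simp add: is_break_def SB_def \<sigma>P)
    then show False using nobreak P by blast
  qed
  moreover have "is_ideal ((\<sigma> ^^ m) ` M)"
    using maximal[OF sigma_orbit_closed[OF n period M]] by (rule maximal_ideal_is_ideal)
  ultimately show "\<not> H \<subseteq> (\<sigma> ^^ m) ` M" "\<not> J \<subseteq> (\<sigma> ^^ m) ` M"
    using ideal_prod_subset_ideal by blast+
qed

lemma spow_image_not_subset:
  assumes "bij \<sigma>" "0 < n" "\<sigma> ^^ n = id" and X: "\<And>m. \<not> X \<subseteq> (\<sigma> ^^ m) ` M"
  shows "\<not> spow \<sigma> j ` X \<subseteq> M"
proof
  assume "spow \<sigma> j ` X \<subseteq> M"
  then have "spow \<sigma> (- j) ` spow \<sigma> j ` X \<subseteq> spow \<sigma> (- j) ` M" by blast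
  moreover have "spow \<sigma> (- j) ` spow \<sigma> j ` X = X"
    using spow_add[OF assms(1), of "- j" j] by (simp add: image_comp comp_def)
  ultimately show False using X spow_mod_period[OF assms(2,3)] by metis
qed

lemma BR_I_not_subset:
  assumes M: "maximal_ideal M"
    and H: "\<And>j. \<not> spow \<sigma> j ` H \<subseteq> M" and J: "\<And>j. \<not> spow \<sigma> j ` J \<subseteq> M"
  shows "\<not> BR_I \<sigma> H J k \<subseteq> M"
proof -
  have "\<not> Ipos \<sigma> J m \<subseteq> M" for m
  proof (induction m)
    case (Suc m)
    then show ?case using J[of "int m"] ideal_prod_not_subset_maximal[OF M] by (simp add: spow_of_nat)
  qed (use one_notin_maximal_ideal[OF M] in auto)
  moreover have "\<not> Ineg \<sigma> H m \<subseteq> M" for m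
  proof (induction m)
    case (Suc m)
    then show ?case using H ideal_prod_not_subset_maximal[OF M] by simp
  qed (use one_notin_maximal_ideal[OF M] in auto)
  ultimately show ?thesis by (simp add: BR_I_def)
qed

lemma BR_I_not_subset_no_break_orbit:
  assumes aut: "ring_aut \<sigma>" and n: "0 < n" and period: "\<sigma> ^^ n = id"
    and M0: "maximal_ideal M0" and nobreak: "\<forall>P \<in> sigma_orbit \<sigma> M0. \<not> is_break \<sigma> H J P"
    and M: "M \<in> sigma_orbit \<sigma> M0"
  shows "maximal_ideal M" "\<not> BR_I \<sigma> H J k \<subseteq> M"
proof -
  show M_max: "maximal_ideal M"
    using sigma_orbit_funpow[OF n period M] maximal_ideal_image_ring_aut[OF ring_aut_funpow[OF aut] M0]
    by blast
  note not_above = no_break_orbit_not_above[OF aut n period M0 nobreak M]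
  show "\<not> BR_I \<sigma> H J k \<subseteq> M"
    using BR_I_not_subset[OF M_max] spow_image_not_subset[OF ring_autD(1)[OF aut] n period] not_above
    by blast
qed

lemma skew_mult_tmono: "skew_mult \<sigma> (tmono i a) g = (\<lambda>k. a * spow \<sigma> i (g (k - i)))"
proof (cases "a = 0")
  case False
  then have "{j. tmono i a j \<noteq> 0} = {i}" by (auto simp: tmono_def)
  then show ?thesis by (simp add: skew_mult_def tmono_def)
qed (simp add: skew_mult_def tmono_def)

lemma skew_mult_tmono_0: "skew_mult \<sigma> (tmono 0 x) f = (\<lambda>k. x * f k)"
  by (simp add: skew_mult_tmono)

lemma skew_mult_tmono_tmono:
  "spow \<sigma> i = id \<Longrightarrow> skew_mult \<sigma> (tmono i a) (tmono j b) = tmono (i + j) (a * b)"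
  unfolding skew_mult_tmono by (auto simp: tmono_def)

lemma skew_add_tmono: "skew_add (tmono k a) (tmono k b) = tmono k (a + b)"
  by (auto simp: skew_add_def tmono_def)

lemma LambdaD:
  assumes "f \<in> Lambda \<sigma> H J n"
  shows "finite {k. f k \<noteq> 0}" "f k \<in> BR_I \<sigma> H J k" "f k \<noteq> 0 \<Longrightarrow> int n dvd k"
  using assms by (auto simp: Lambda_def finsupp_def)

lemma tmono_in_Lambda: "a \<in> BR_I \<sigma> H J k \<Longrightarrow> int n dvd k \<Longrightarrow> tmono k a \<in> Lambda \<sigma> H J n"
  using is_idealD(1)[OF is_ideal_BR_I]
  by (auto simp: Lambda_def finsupp_def tmono_def finite_subset[of _ "{k}"])

lemma tmono_0_in_Lambda: "tmono 0 r \<in> Lambda \<sigma> H J n"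
  by (rule tmono_in_Lambda) (simp_all add: BR_I_def)

locale periodic_aut =
  fixes \<sigma> :: "'a::comm_ring_1 \<Rightarrow> 'a" and n :: nat
  assumes n_pos: "0 < n" and period: "\<sigma> ^^ n = id"
begin

lemma spow_dvd: "int n dvd k \<Longrightarrow> spow \<sigma> k = id"
  by (simp add: spow_mod_period[OF n_pos period])

lemma div_add_dvd: "int n dvd i \<Longrightarrow> (i + j) div int n = i div int n + j div int n"
  using n_pos by (auto elim!: dvdE)

end

lemma lin_autD:
  assumes "lin_aut rmul \<theta>"
  shows "bij \<theta>" "\<theta> (v + w) = \<theta> v + \<theta> w" "\<theta> (rmul r v) = rmul r (\<theta> v)"
  using assms by (simp_all add: lin_aut_def)

lemma lin_aut_zero: "lin_aut rmul \<theta> \<Longrightarrow> \<theta> 0 = 0"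
  using lin_autD(2)[of rmul \<theta> 0 0] by simp

lemma lin_aut_uminus: "lin_aut rmul \<theta> \<Longrightarrow> \<theta> (- v) = - \<theta> v"
  using lin_autD(2)[of rmul \<theta> v "- v"] lin_aut_zero[of rmul \<theta>] by (metis add.right_inverse minus_unique)

lemma lin_aut_sum: "lin_aut rmul \<theta> \<Longrightarrow> \<theta> (sum g S) = (\<Sum>x\<in>S. \<theta> (g x))"
  by (induction S rule: infinite_finite_induct) (simp_all add: lin_aut_zero lin_autD(2))

lemma lin_aut_inv:
  assumes "lin_aut rmul \<theta>"
  shows "lin_aut rmul (inv \<theta>)"
proof -
  have bij: "bij \<theta>" using lin_autD(1)[OF assms] .
  have "inv \<theta> (\<theta> x) = x" "\<theta> (inv \<theta> x) = x" for x
    using bij by (simp_all add: bij_is_inj bij_is_surj surj_f_inv_f)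
  then show ?thesis
    using bij lin_autD(2,3)[OF assms] unfolding lin_aut_def by (metis bij_imp_bij_inv)
qed

lemma lin_aut_funpow: "lin_aut rmul \<theta> \<Longrightarrow> lin_aut rmul (\<theta> ^^ m)"
  by (induction m) (auto simp: lin_aut_def intro: bij_comp)

lemma lin_aut_spow: "lin_aut rmul \<theta> \<Longrightarrow> lin_aut rmul (spow \<theta> k)"
  by (simp add: spow_def lin_aut_funpow lin_aut_inv)

locale quotient_space =
  fixes M :: "'a::comm_ring_1 set" and rmul :: "'a \<Rightarrow> 'v::ab_group_add \<Rightarrow> 'v"
  assumes RM_space: "RM_space M rmul"
begin

lemma scale_one [simp]: "rmul 1 v = v"
  and scale_left_distrib: "rmul (a + b) v = rmul a v + rmul b v"
  and scale_right_distrib: "rmul a (v + w) = rmul a v + rmul a w"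
  and scale_scale: "rmul (a * b) v = rmul a (rmul b v)"
  and scale_annihilated: "x \<in> M \<Longrightarrow> rmul x v = 0"
  using RM_space by (simp_all add: RM_space_def)

lemma scale_zero_left [simp]: "rmul 0 v = 0"
  using scale_left_distrib[of 0 0 v] by simp

lemma scale_zero_right [simp]: "rmul a 0 = 0"
  using scale_right_distrib[of a 0 0] by simp

lemma scale_minus_left: "rmul (- a) v = - rmul a v"
  using scale_left_distrib[of a "- a" v] by (simp add: eq_neg_iff_add_eq_0 add.commute)

lemma scale_minus_right: "rmul a (- v) = - rmul a v"
  using scale_right_distrib[of a v "- v"] by (simp add: eq_neg_iff_add_eq_0 add.commute)

lemma scale_diff_left: "rmul (a - b) v = rmul a v - rmul b v"
  using scale_left_distrib[of a "- b" v] by (simp add: scale_minus_left)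

lemma scale_sum_left: "rmul (sum g S) v = (\<Sum>x\<in>S. rmul (g x) v)"
  by (induction S rule: infinite_finite_induct) (simp_all add: scale_left_distrib)

lemma scale_sum_right: "rmul a (sum g S) = (\<Sum>x\<in>S. rmul a (g x))"
  by (induction S rule: infinite_finite_induct) (simp_all add: scale_right_distrib)

lemma scale_one_mod: "y - 1 \<in> M \<Longrightarrow> rmul y v = v"
  using scale_left_distrib[of "y - 1" 1 v] scale_annihilated[of "y - 1" v] by simp

end

lemma subspace_sum: "subspace rmul W \<Longrightarrow> (\<And>x. x \<in> S \<Longrightarrow> g x \<in> W) \<Longrightarrow> sum g S \<in> W"
  by (induction S rule: infinite_finite_induct) (auto simp: subspace_def)

section \<open>The \<Lambda>-module attached to an automorphism \<theta>\<close>

text \<open>a t^(kn) acts as a \<theta>^k. Off the degrees divisible by n the value is junk (k div n rounds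
  down), but elements of \<Lambda>_n have no such terms.\<close>
definition theta_action ::
    "('a::comm_ring_1 \<Rightarrow> 'v::ab_group_add \<Rightarrow> 'v) \<Rightarrow> ('v \<Rightarrow> 'v) \<Rightarrow> nat \<Rightarrow> (int \<Rightarrow> 'a) \<Rightarrow> 'v \<Rightarrow> 'v" where
  "theta_action rmul \<theta> n f v = (\<Sum>k | f k \<noteq> 0. rmul (f k) (spow \<theta> (k div int n) v))"

context quotient_space
begin

lemma theta_action_superset:
  assumes "finite S" "{k. f k \<noteq> 0} \<subseteq> S"
  shows "theta_action rmul \<theta> n f v = (\<Sum>k\<in>S. rmul (f k) (spow \<theta> (k div int n) v))"
  unfolding theta_action_def by (rule sum.mono_neutral_left[OF assms]) auto

lemma theta_action_tmono: "theta_action rmul \<theta> n (tmono k a) v = rmul a (spow \<theta> (k div int n) v)"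
proof -
  have supp: "{j. tmono k a j \<noteq> 0} \<subseteq> {k}" by (auto simp: tmono_def)
  show ?thesis by (subst theta_action_superset[OF _ supp]) (simp_all add: tmono_def)
qed

lemma theta_action_skew_add:
  assumes "finsupp f" "finsupp g"
  shows "theta_action rmul \<theta> n (skew_add f g) v = theta_action rmul \<theta> n f v + theta_action rmul \<theta> n g v"
proof -
  let ?S = "{k. f k \<noteq> 0} \<union> {k. g k \<noteq> 0}"
  have S: "finite ?S" using assms by (simp add: finsupp_def)
  have "{k. skew_add f g k \<noteq> 0} \<subseteq> ?S" by (auto simp: skew_add_def)
  then have "theta_action rmul \<theta> n (skew_add f g) v = (\<Sum>k\<in>?S. rmul (skew_add f g k) (spow \<theta> (k div int n) v))"
    by (rule theta_action_superset[OF S])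
  also have "\<dots> = (\<Sum>k\<in>?S. rmul (f k) (spow \<theta> (k div int n) v)) + (\<Sum>k\<in>?S. rmul (g k) (spow \<theta> (k div int n) v))"
    by (simp add: skew_add_def scale_left_distrib sum.distrib)
  also have "\<dots> = theta_action rmul \<theta> n f v + theta_action rmul \<theta> n g v"
    using theta_action_superset[OF S] by simp
  finally show ?thesis .
qed

lemma theta_action_add:
  assumes "lin_aut rmul \<theta>"
  shows "theta_action rmul \<theta> n f (v + w) = theta_action rmul \<theta> n f v + theta_action rmul \<theta> n f w"
  by (simp add: theta_action_def lin_autD(2)[OF lin_aut_spow[OF assms]] scale_right_distrib sum.distrib)

end

context periodic_aut
begin

lemma skew_mult_Lambda:
  "f \<in> Lambda \<sigma> H J n \<Longrightarrow> skew_mult \<sigma> f g k = (\<Sum>i | f i \<noteq> 0. f i * g (k - i))"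
  unfolding skew_mult_def by (rule sum.cong) (auto simp: spow_dvd LambdaD(3))

lemma skew_mult_support:
  assumes "f \<in> Lambda \<sigma> H J n"
  shows "{k. skew_mult \<sigma> f g k \<noteq> 0} \<subseteq> (\<lambda>(i, j). i + j) ` ({i. f i \<noteq> 0} \<times> {j. g j \<noteq> 0})"
proof
  fix k assume "k \<in> {k. skew_mult \<sigma> f g k \<noteq> 0}"
  then have "(\<Sum>i | f i \<noteq> 0. f i * g (k - i)) \<noteq> 0" using skew_mult_Lambda[OF assms] by simp
  then obtain i where "i \<in> {i. f i \<noteq> 0}" "f i * g (k - i) \<noteq> 0" by (meson sum.neutral)
  then show "k \<in> (\<lambda>(i, j). i + j) ` ({i. f i \<noteq> 0} \<times> {j. g j \<noteq> 0})"
    by (intro image_eqI[of _ _ "(i, k - i)"]) auto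
qed

end

locale theta_construction = periodic_aut \<sigma> n + quotient_space M rmul
  for \<sigma> :: "'a::comm_ring_1 \<Rightarrow> 'a" and n M and rmul :: "'a \<Rightarrow> 'v::ab_group_add \<Rightarrow> 'v" +
  fixes \<theta> :: "'v \<Rightarrow> 'v"
  assumes lin: "lin_aut rmul \<theta>"
begin

abbreviation act :: "(int \<Rightarrow> 'a) \<Rightarrow> 'v \<Rightarrow> 'v" where
  "act \<equiv> theta_action rmul \<theta> n"

lemma theta_action_skew_mult:
  assumes f: "f \<in> Lambda \<sigma> H J n" and g: "g \<in> Lambda \<sigma> H J n"
  shows "act (skew_mult \<sigma> f g) v = act f (act g v)"
proof -
  define Sf where "Sf = {k. f k \<noteq> 0}"
  define Sg where "Sg = {k. g k \<noteq> 0}"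
  define T where "T k = spow \<theta> (k div int n) v" for k
  define S where "S = (\<lambda>(i, j). i + j) ` (Sf \<times> Sg)"
  have fin: "finite Sf" "finite Sg" "finite S" using LambdaD(1)[OF f] LambdaD(1)[OF g] by (simp_all add: Sf_def Sg_def S_def)
  have fg: "skew_mult \<sigma> f g k = (\<Sum>i\<in>Sf. f i * g (k - i))" for k
    using skew_mult_Lambda[OF f] by (simp add: Sf_def)
  have "{k. skew_mult \<sigma> f g k \<noteq> 0} \<subseteq> S"
    using skew_mult_support[OF f] by (simp add: S_def Sf_def Sg_def)
  then have "act (skew_mult \<sigma> f g) v = (\<Sum>k\<in>S. \<Sum>i\<in>Sf. rmul (f i * g (k - i)) (T k))"
    by (simp add: theta_action_superset[OF fin(3)] fg scale_sum_left T_def)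
  also have "\<dots> = (\<Sum>i\<in>Sf. \<Sum>k\<in>S. rmul (f i * g (k - i)) (T k))"
    by (rule sum.swap)
  also have "\<dots> = (\<Sum>i\<in>Sf. \<Sum>j\<in>Sg. rmul (f i * g j) (T (i + j)))"
  proof (rule sum.cong[OF refl])
    fix i assume "i \<in> Sf"
    then have "(\<lambda>j. i + j) ` Sg \<subseteq> S" by (auto simp: S_def)
    moreover have "g (k - i) = 0" if "k \<notin> (\<lambda>j. i + j) ` Sg" for k
      using that by (auto simp: Sg_def intro: image_eqI[of _ _ "k - i"])
    ultimately have "(\<Sum>k\<in>S. rmul (f i * g (k - i)) (T k)) = (\<Sum>k\<in>(\<lambda>j. i + j) ` Sg. rmul (f i * g (k - i)) (T k))"
      by (intro sum.mono_neutral_right[OF fin(3)]) auto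
    then show "(\<Sum>k\<in>S. rmul (f i * g (k - i)) (T k)) = (\<Sum>j\<in>Sg. rmul (f i * g j) (T (i + j)))"
      by (simp add: sum.reindex inj_on_def)
  qed
  also have "\<dots> = act f (act g v)"
  proof -
    have "T (i + j) = spow \<theta> (i div int n) (T j)" if "i \<in> Sf" for i j
      using that LambdaD(3)[OF f] spow_add[OF lin_autD(1)[OF lin]] by (simp add: T_def Sf_def div_add_dvd)
    then show ?thesis
      by (simp add: theta_action_def Sf_def Sg_def T_def lin_aut_sum[OF lin_aut_spow[OF lin]]
          lin_autD(3)[OF lin_aut_spow[OF lin]] scale_sum_right scale_scale)
  qed
  finally show ?thesis .
qed

lemma theta_action_ext_ideal: "x \<in> ext_ideal \<sigma> H J n M \<Longrightarrow> finsupp x \<and> (\<forall>v. act x v = 0)"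
proof (induction rule: ext_ideal.induct)
  case (gen x f)
  have "{k. x * f k \<noteq> 0} \<subseteq> {k. f k \<noteq> 0}" by auto
  then have "finsupp (\<lambda>k. x * f k) \<and> (\<forall>v. act (\<lambda>k. x * f k) v = 0)"
    using LambdaD(1)[OF gen(2)] finite_subset theta_action_superset[of "{k. f k \<noteq> 0}" "\<lambda>k. x * f k"]
    by (auto simp: finsupp_def scale_scale scale_annihilated[OF gen(1)])
  then show ?case by (simp add: skew_mult_tmono_0)
next
  case (add a b)
  have "{k. skew_add a b k \<noteq> 0} \<subseteq> {k. a k \<noteq> 0} \<union> {k. b k \<noteq> 0}" by (auto simp: skew_add_def)
  then have "finsupp (skew_add a b)" using add.IH by (auto simp: finsupp_def intro: finite_subset)
  then show ?case using add.IH theta_action_skew_add by simp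
qed (simp add: finsupp_def theta_action_def)

theorem theta_action_quot_module:
  "quot_module \<sigma> H J n M act \<and> (\<forall>r v. act (tmono 0 r) v = rmul r v) \<and> theta_acts \<sigma> H J n act rmul \<theta>"
proof (intro conjI allI)
  show "act (tmono 0 r) v = rmul r v" for r v by (simp add: theta_action_tmono)
  have "- int n div int n = -1" using n_pos by (simp add: zdiv_zminus1_eq_if)
  then show "theta_acts \<sigma> H J n act rmul \<theta>"
    using n_pos by (simp add: theta_acts_def theta_action_tmono spow_1 spow_minus_1)
  show "quot_module \<sigma> H J n M act"
    unfolding quot_module_def Lambda_module_def
    using theta_action_ext_ideal theta_action_skew_add theta_action_add[OF lin] theta_action_skew_mult
    by (auto simp: theta_action_tmono Lambda_def)
qed

end

section \<open>Subspaces invariant under an automorphism\<close>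

inductive_set invariant_span :: "('a \<Rightarrow> 'v::ab_group_add \<Rightarrow> 'v) \<Rightarrow> ('v \<Rightarrow> 'v) set \<Rightarrow> 'v \<Rightarrow> 'v set"
  for rmul F w where
  base: "w \<in> invariant_span rmul F w"
| add: "u \<in> invariant_span rmul F w \<Longrightarrow> v \<in> invariant_span rmul F w \<Longrightarrow> u + v \<in> invariant_span rmul F w"
| scale: "v \<in> invariant_span rmul F w \<Longrightarrow> rmul r v \<in> invariant_span rmul F w"
| map: "f \<in> F \<Longrightarrow> v \<in> invariant_span rmul F w \<Longrightarrow> f v \<in> invariant_span rmul F w"

definition parity_sign :: "int \<Rightarrow> 'a::comm_ring_1" where
  "parity_sign k = (if even k then 1 else - 1)"

lemma parity_sign_0 [simp]: "parity_sign 0 = 1"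
  by (simp add: parity_sign_def)

lemma parity_sign_add_odd: "odd s \<Longrightarrow> parity_sign (k + s) = - parity_sign k"
  by (simp add: parity_sign_def)

text \<open>The vectors p(\<theta>) w for Laurent polynomials p = \<Sum> d_k x^k with p(-1) = 0.\<close>
definition minus_one_root_combinations ::
    "('a::comm_ring_1 \<Rightarrow> 'v::ab_group_add \<Rightarrow> 'v) \<Rightarrow> ('v \<Rightarrow> 'v) \<Rightarrow> 'v \<Rightarrow> 'v set" where
  "minus_one_root_combinations rmul \<theta> w =
     {\<Sum>k\<in>S. rmul (d k) (spow \<theta> k w) | S d. finite S \<and> (\<Sum>k\<in>S. parity_sign k * d k) = 0}"

context quotient_space
begin

lemma subspace_invariant_span: "subspace rmul (invariant_span rmul F w)"
  unfolding subspace_def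
proof (intro conjI ballI allI)
  show "0 \<in> invariant_span rmul F w"
    using invariant_span.scale[OF invariant_span.base, where rmul=rmul and r=0] by simp
  show "- v \<in> invariant_span rmul F w" if "v \<in> invariant_span rmul F w" for v
    using invariant_span.scale[OF that, where r="- 1"] by (simp add: scale_minus_left)
qed (auto intro: invariant_span.add invariant_span.scale)

lemma invariant_span_least:
  assumes "subspace rmul W" "w \<in> W" "\<And>f. f \<in> F \<Longrightarrow> f ` W \<subseteq> W"
  shows "invariant_span rmul F w \<subseteq> W"
proof
  fix v assume "v \<in> invariant_span rmul F w"
  then show "v \<in> W" by induction (use assms in \<open>auto simp: subspace_def\<close>)
qed

lemma invariant_span_funpow:
  "f \<in> F \<Longrightarrow> v \<in> invariant_span rmul F w \<Longrightarrow> (f ^^ m) v \<in> invariant_span rmul F w"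
  by (induction m) (auto intro: invariant_span.map)

lemma combination_extend_by_zero:
  assumes "finite T" "S \<subseteq> T"
  shows "(\<Sum>k\<in>S. rmul (d k) (spow \<theta> k w)) = (\<Sum>k\<in>T. rmul (if k \<in> S then d k else 0) (spow \<theta> k w))"
    and "(\<Sum>k\<in>S. parity_sign k * d k) = (\<Sum>k\<in>T. parity_sign k * (if k \<in> S then d k else 0))"
  by (rule sum.mono_neutral_cong_left[OF assms]; simp)+

end

lemma minus_one_root_combinationsI:
  "finite S \<Longrightarrow> (\<Sum>k\<in>S. parity_sign k * d k) = 0 \<Longrightarrow> v = (\<Sum>k\<in>S. rmul (d k) (spow \<theta> k w))
    \<Longrightarrow> v \<in> minus_one_root_combinations rmul \<theta> w"
  unfolding minus_one_root_combinations_def by blast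

lemma minus_one_root_combinationsE:
  assumes "v \<in> minus_one_root_combinations rmul \<theta> w"
  obtains S d where "finite S" "(\<Sum>k\<in>S. parity_sign k * d k) = 0" "v = (\<Sum>k\<in>S. rmul (d k) (spow \<theta> k w))"
  using assms unfolding minus_one_root_combinations_def by blast

locale theta_space = quotient_space M rmul
  for M :: "'a::comm_ring_1 set" and rmul :: "'a \<Rightarrow> 'v::ab_group_add \<Rightarrow> 'v" +
  fixes \<theta> :: "'v \<Rightarrow> 'v"
  assumes maximal: "maximal_ideal M" and lin: "lin_aut rmul \<theta>"
begin

lemma spow_theta_scale: "spow \<theta> k (rmul r v) = rmul r (spow \<theta> k v)"
  by (rule lin_autD(3)[OF lin_aut_spow[OF lin]])

lemma spow_theta_sum: "spow \<theta> k (sum g S) = (\<Sum>x\<in>S. spow \<theta> k (g x))"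
  by (rule lin_aut_sum[OF lin_aut_spow[OF lin]])

lemma spow_theta_add: "spow \<theta> (i + j) v = spow \<theta> i (spow \<theta> j v)"
  by (rule spow_add[OF lin_autD(1)[OF lin]])

lemma minus_one_root_combinations_add:
  assumes "u \<in> minus_one_root_combinations rmul \<theta> w" "v \<in> minus_one_root_combinations rmul \<theta> w"
  shows "u + v \<in> minus_one_root_combinations rmul \<theta> w"
proof -
  obtain S d where S: "finite S" "(\<Sum>k\<in>S. parity_sign k * d k) = 0" "u = (\<Sum>k\<in>S. rmul (d k) (spow \<theta> k w))"
    using assms(1) by (rule minus_one_root_combinationsE)
  obtain T e where T: "finite T" "(\<Sum>k\<in>T. parity_sign k * e k) = 0" "v = (\<Sum>k\<in>T. rmul (e k) (spow \<theta> k w))"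
    using assms(2) by (rule minus_one_root_combinationsE)
  define c where "c k = (if k \<in> S then d k else 0) + (if k \<in> T then e k else 0)" for k
  have fin: "finite (S \<union> T)" using S T by simp
  note extend = combination_extend_by_zero[OF fin Un_upper1] combination_extend_by_zero[OF fin Un_upper2]
  show ?thesis
  proof (rule minus_one_root_combinationsI[OF fin])
    have "(\<Sum>k\<in>S \<union> T. parity_sign k * c k) =
        (\<Sum>k\<in>S. parity_sign k * d k) + (\<Sum>k\<in>T. parity_sign k * e k)"
      unfolding extend by (simp add: c_def distrib_left sum.distrib)
    then show "(\<Sum>k\<in>S \<union> T. parity_sign k * c k) = 0" using S(2) T(2) by simp
    have "(\<Sum>k\<in>S \<union> T. rmul (c k) (spow \<theta> k w)) =
        (\<Sum>k\<in>S. rmul (d k) (spow \<theta> k w)) + (\<Sum>k\<in>T. rmul (e k) (spow \<theta> k w))"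
      unfolding extend by (simp add: c_def scale_left_distrib sum.distrib)
    then show "u + v = (\<Sum>k\<in>S \<union> T. rmul (c k) (spow \<theta> k w))" using S(3) T(3) by simp
  qed
qed

lemma minus_one_root_combinations_scale:
  assumes "v \<in> minus_one_root_combinations rmul \<theta> w"
  shows "rmul r v \<in> minus_one_root_combinations rmul \<theta> w"
proof -
  obtain S d where S: "finite S" "(\<Sum>k\<in>S. parity_sign k * d k) = 0" "v = (\<Sum>k\<in>S. rmul (d k) (spow \<theta> k w))"
    using assms by (rule minus_one_root_combinationsE)
  show ?thesis
  proof (rule minus_one_root_combinationsI[OF S(1)])
    have "(\<Sum>k\<in>S. parity_sign k * (r * d k)) = r * (\<Sum>k\<in>S. parity_sign k * d k)"
      by (simp add: sum_distrib_left mult.left_commute)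
    then show "(\<Sum>k\<in>S. parity_sign k * (r * d k)) = 0" using S(2) by simp
    show "rmul r v = (\<Sum>k\<in>S. rmul (r * d k) (spow \<theta> k w))"
      using S(3) by (simp add: scale_sum_right scale_scale)
  qed
qed

text \<open>Multiplying p by x^s with s odd preserves p(-1) = 0.\<close>
lemma minus_one_root_combinations_shift:
  assumes "v \<in> minus_one_root_combinations rmul \<theta> w" "odd s"
  shows "spow \<theta> s v \<in> minus_one_root_combinations rmul \<theta> w"
proof -
  obtain S d where S: "finite S" "(\<Sum>k\<in>S. parity_sign k * d k) = 0" "v = (\<Sum>k\<in>S. rmul (d k) (spow \<theta> k w))"
    using assms(1) by (rule minus_one_root_combinationsE)
  have inj: "inj_on (\<lambda>k. k + s) S" by (simp add: inj_on_def)
  show ?thesis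
  proof (rule minus_one_root_combinationsI)
    show "finite ((\<lambda>k. k + s) ` S)" using S(1) by simp
    have "(\<Sum>k\<in>(\<lambda>k. k + s) ` S. parity_sign k * d (k - s)) = - (\<Sum>k\<in>S. parity_sign k * d k)"
      using assms(2) by (simp add: sum.reindex[OF inj] parity_sign_add_odd sum_negf)
    then show "(\<Sum>k\<in>(\<lambda>k. k + s) ` S. parity_sign k * d (k - s)) = 0" using S(2) by simp
    show "spow \<theta> s v = (\<Sum>k\<in>(\<lambda>k. k + s) ` S. rmul (d (k - s)) (spow \<theta> k w))"
      using S(3) by (simp add: sum.reindex[OF inj] spow_theta_sum spow_theta_scale add.commute flip: spow_theta_add)
  qed
qed

lemma one_plus_theta_in_minus_one_root_combinations:
  "w + \<theta> w \<in> minus_one_root_combinations rmul \<theta> w"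
  by (rule minus_one_root_combinationsI[of "{0, 1}" "\<lambda>_. 1"]) (simp_all add: parity_sign_def spow_1)

lemma bi_invariant_span_subset:
  "invariant_span rmul {\<theta>, inv \<theta>} (w + \<theta> w) \<subseteq> minus_one_root_combinations rmul \<theta> w"
proof
  fix v assume "v \<in> invariant_span rmul {\<theta>, inv \<theta>} (w + \<theta> w)"
  then show "v \<in> minus_one_root_combinations rmul \<theta> w"
  proof induction
    case (map f v)
    then show ?case
      using minus_one_root_combinations_shift[of v w 1] minus_one_root_combinations_shift[of v w "- 1"]
      by (auto simp: spow_1 spow_minus_1)
  qed (simp_all add: one_plus_theta_in_minus_one_root_combinations
      minus_one_root_combinations_add minus_one_root_combinations_scale)
qed

text \<open>Let L be the least index with r_L a unit mod M. Applying \<theta>^(-L-1) to the relation and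
  dividing by r_L expresses \<theta>^(-1) w through nonnegative powers of \<theta>.\<close>
lemma inv_theta_in_invariant_span_of_relation:
  assumes S: "finite S" and rel: "(\<Sum>k\<in>S. rmul (r k) (spow \<theta> k w)) = 0" and unit: "\<exists>k\<in>S. r k \<notin> M"
  shows "inv \<theta> w \<in> invariant_span rmul {\<theta>} w"
proof -
  define Z where "Z = {k \<in> S. r k \<notin> M}"
  have Z: "finite Z" "Z \<noteq> {}" "Z \<subseteq> S" using S unit by (auto simp: Z_def)
  define L where "L = Min Z"
  have L: "L \<in> Z" "\<And>k. k \<in> Z \<Longrightarrow> L \<le> k" using Z by (simp_all add: L_def)
  obtain e where e: "e * r L - 1 \<in> M" using maximal_ideal_inverse[OF maximal] L(1) by (auto simp: Z_def)
  define Q where "Q = (\<Sum>k\<in>Z - {L}. rmul (r k) (spow \<theta> (k - L - 1) w))"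
  have "rmul (r L) (inv \<theta> w) + Q = (\<Sum>k\<in>Z. rmul (r k) (spow \<theta> (k - L - 1) w))"
    unfolding sum.remove[OF Z(1) L(1)] by (simp add: Q_def spow_minus_1)
  also have "\<dots> = (\<Sum>k\<in>S. rmul (r k) (spow \<theta> (k - L - 1) w))"
    by (rule sum.mono_neutral_left[OF S Z(3)]) (auto simp: Z_def scale_annihilated)
  also have "\<dots> = spow \<theta> (- L - 1) (\<Sum>k\<in>S. rmul (r k) (spow \<theta> k w))"
    by (simp add: spow_theta_sum spow_theta_scale algebra_simps flip: spow_theta_add)
  also have "\<dots> = 0" by (simp add: rel lin_aut_zero[OF lin_aut_spow[OF lin]])
  finally have "rmul (r L) (inv \<theta> w) = - Q" by (simp add: eq_neg_iff_add_eq_0)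
  then have "inv \<theta> w = - rmul e Q"
    using scale_one_mod[OF e, of "inv \<theta> w"] by (simp add: scale_scale scale_minus_right)
  moreover have "rmul e Q \<in> invariant_span rmul {\<theta>} w"
    unfolding Q_def scale_sum_right
  proof (intro subspace_sum[OF subspace_invariant_span] invariant_span.scale)
    fix k assume "k \<in> Z - {L}"
    then have "spow \<theta> (k - L - 1) = \<theta> ^^ nat (k - L - 1)" using L(2)[of k] by (simp add: spow_nonneg)
    then show "spow \<theta> (k - L - 1) w \<in> invariant_span rmul {\<theta>} w"
      using invariant_span_funpow[OF _ invariant_span.base] by simp
  qed
  ultimately show ?thesis using subspace_invariant_span by (simp add: subspace_def)
qed

lemma inv_theta_in_invariant_span:
  assumes bi: "\<And>W. subspace rmul W \<Longrightarrow> \<theta> ` W \<subseteq> W \<Longrightarrow> inv \<theta> ` W \<subseteq> W \<Longrightarrow> W = {0} \<or> W = UNIV"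
  shows "inv \<theta> w \<in> invariant_span rmul {\<theta>} w"
proof (cases "w + \<theta> w = 0")
  case True
  then have "\<theta> (- w) = w" by (simp add: lin_aut_uminus[OF lin]) (metis add_eq_0_iff2)
  then have "inv \<theta> w = - w" using lin_autD(1)[OF lin] by (metis bij_is_inj inv_f_f)
  then show ?thesis
    using subspace_invariant_span[of "{\<theta>}" w] invariant_span.base[of w rmul "{\<theta>}"] by (simp add: subspace_def)
next
  case False
  let ?B = "invariant_span rmul {\<theta>, inv \<theta>} (w + \<theta> w)"
  have "?B = {0} \<or> ?B = UNIV"
    by (rule bi[OF subspace_invariant_span]) (auto intro: invariant_span.map)
  then have "?B = UNIV" using invariant_span.base[of "w + \<theta> w"] False by auto
  then have "w \<in> minus_one_root_combinations rmul \<theta> w" using bi_invariant_span_subset by blast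
  then obtain S d where S: "finite S" "(\<Sum>k\<in>S. parity_sign k * d k) = 0" "w = (\<Sum>k\<in>S. rmul (d k) (spow \<theta> k w))"
    by (rule minus_one_root_combinationsE)
  define T where "T = insert 0 S"
  define r where "r k = (if k = 0 then 1 else 0) - (if k \<in> S then d k else 0)" for k
  have T: "finite T" "S \<subseteq> T" "0 \<in> T" using S(1) by (auto simp: T_def)
  note extend = combination_extend_by_zero[OF T(1,2)]
  have "(\<Sum>k\<in>T. rmul (r k) (spow \<theta> k w)) = w - (\<Sum>k\<in>S. rmul (d k) (spow \<theta> k w))"
    unfolding extend using T(1,3)
    by (simp add: r_def scale_diff_left sum_subtractf if_distrib[of "\<lambda>c. rmul c _"] cong: if_cong)
  then have rel: "(\<Sum>k\<in>T. rmul (r k) (spow \<theta> k w)) = 0" using S(3) by simp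
  have "(\<Sum>k\<in>T. parity_sign k * r k) = 1 - (\<Sum>k\<in>S. parity_sign k * d k)"
  proof -
    have "parity_sign k * (if k = 0 then 1 else 0) = (if k = 0 then 1 else (0::'a))" for k by simp
    then show ?thesis unfolding extend using T(1,3) by (simp add: r_def right_diff_distrib sum_subtractf)
  qed
  then have "(\<Sum>k\<in>T. parity_sign k * r k) \<notin> M" using S(2) one_notin_maximal_ideal[OF maximal] by simp
  moreover have "(\<Sum>k\<in>T. parity_sign k * r k) \<in> M" if "\<forall>k\<in>T. r k \<in> M"
    using that is_idealD(4)[OF maximal_ideal_is_ideal[OF maximal]]
    by (intro is_ideal_sum[OF maximal_ideal_is_ideal[OF maximal]]) simp
  ultimately have "\<exists>k\<in>T. r k \<notin> M" by blast
  then show ?thesis by (rule inv_theta_in_invariant_span_of_relation[OF T(1) rel])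
qed

theorem invariant_subspaces_trivial_iff:
  "(\<forall>W. subspace rmul W \<and> \<theta> ` W \<subseteq> W \<longrightarrow> W = {0} \<or> W = UNIV) \<longleftrightarrow>
   (\<forall>W. subspace rmul W \<and> \<theta> ` W \<subseteq> W \<and> inv \<theta> ` W \<subseteq> W \<longrightarrow> W = {0} \<or> W = UNIV)"
proof (intro iffI allI impI)
  fix W assume bi: "\<forall>W. subspace rmul W \<and> \<theta> ` W \<subseteq> W \<and> inv \<theta> ` W \<subseteq> W \<longrightarrow> W = {0} \<or> W = UNIV"
    and W: "subspace rmul W \<and> \<theta> ` W \<subseteq> W"
  show "W = {0} \<or> W = UNIV"
  proof (cases "W \<subseteq> {0}")
    case False
    then obtain w where w: "w \<in> W" "w \<noteq> 0" by blast
    let ?F = "invariant_span rmul {\<theta>} w"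
    have "inv \<theta> ` ?F \<subseteq> ?F"
    proof clarify
      fix v assume "v \<in> ?F"
      then show "inv \<theta> v \<in> ?F"
      proof induction
        case base
        show ?case by (rule inv_theta_in_invariant_span) (use bi in blast)
      next
        case (add u v)
        then show ?case by (simp add: lin_autD(2)[OF lin_aut_inv[OF lin]] invariant_span.add)
      next
        case (scale v r)
        then show ?case by (simp add: lin_autD(3)[OF lin_aut_inv[OF lin]] invariant_span.scale)
      next
        case (map f v)
        then show ?case using lin_autD(1)[OF lin] by (simp add: bij_is_inj)
      qed
    qed
    moreover have "\<theta> ` ?F \<subseteq> ?F" by (auto intro: invariant_span.map)
    ultimately have "?F = {0} \<or> ?F = UNIV" using bi subspace_invariant_span by blast
    then have "?F = UNIV" using invariant_span.base[of w rmul "{\<theta>}"] w(2) by auto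
    moreover have "?F \<subseteq> W" using W w(1) by (intro invariant_span_least) auto
    ultimately show ?thesis by blast
  qed (use W in \<open>auto simp: subspace_def\<close>)
qed blast

end

section \<open>Modules over \<Lambda>_n/(M)\<close>

locale Lambda_quotient_module = periodic_aut \<sigma> n
  for \<sigma> :: "'a::comm_ring_1 \<Rightarrow> 'a" and n +
  fixes H J M :: "'a set" and act :: "(int \<Rightarrow> 'a) \<Rightarrow> 'v::ab_group_add \<Rightarrow> 'v"
  assumes maximal: "maximal_ideal M"
    and not_subset_pos: "\<not> BR_I \<sigma> H J (int n) \<subseteq> M"
    and not_subset_neg: "\<not> BR_I \<sigma> H J (- int n) \<subseteq> M"
    and quot_module: "quot_module \<sigma> H J n M act"
begin

abbreviation \<Lambda> :: "(int \<Rightarrow> 'a) set" where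
  "\<Lambda> \<equiv> Lambda \<sigma> H J n"

abbreviation rm :: "'a \<Rightarrow> 'v \<Rightarrow> 'v" where
  "rm r \<equiv> act (tmono 0 r)"

lemma act_one: "act (tmono 0 1) v = v"
  and act_skew_add: "f \<in> \<Lambda> \<Longrightarrow> g \<in> \<Lambda> \<Longrightarrow> act (skew_add f g) v = act f v + act g v"
  and act_add: "f \<in> \<Lambda> \<Longrightarrow> act f (v + w) = act f v + act f w"
  and act_skew_mult: "f \<in> \<Lambda> \<Longrightarrow> g \<in> \<Lambda> \<Longrightarrow> act (skew_mult \<sigma> f g) v = act f (act g v)"
  and act_ext_ideal: "f \<in> ext_ideal \<sigma> H J n M \<Longrightarrow> act f v = 0"
  using quot_module by (simp_all add: quot_module_def Lambda_module_def)

lemma RM_space_rm: "RM_space M rm"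
  unfolding RM_space_def
proof (intro conjI allI ballI)
  show "rm 1 v = v" for v by (rule act_one)
  show "rm (a + b) v = rm a v + rm b v" for a b v
    using act_skew_add[OF tmono_0_in_Lambda tmono_0_in_Lambda] by (simp add: skew_add_tmono)
  show "rm a (v + w) = rm a v + rm a w" for a v w by (rule act_add[OF tmono_0_in_Lambda])
  show "rm (a * b) v = rm a (rm b v)" for a b v
    using act_skew_mult[OF tmono_0_in_Lambda tmono_0_in_Lambda] by (simp add: skew_mult_tmono_tmono)
  fix x v assume "x \<in> M"
  then have "skew_mult \<sigma> (tmono 0 x) (tmono 0 1) \<in> ext_ideal \<sigma> H J n M"
    by (rule ext_ideal.gen[OF _ tmono_0_in_Lambda])
  then show "rm x v = 0" using act_ext_ideal by (simp add: skew_mult_tmono_tmono)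
qed

sublocale quotient_space M rm
  by (rule quotient_space.intro[OF RM_space_rm])

lemma act_tmono_scale:
  assumes "a \<in> BR_I \<sigma> H J k" "int n dvd k"
  shows "act (tmono k (r * a)) v = rm r (act (tmono k a) v)"
  using act_skew_mult[OF tmono_0_in_Lambda tmono_in_Lambda[OF assms]]
  by (simp add: skew_mult_tmono_tmono)

lemma act_tmono_commute:
  assumes "a \<in> BR_I \<sigma> H J k" "int n dvd k"
  shows "act (tmono k a) (rm r v) = rm r (act (tmono k a) v)"
  using act_skew_mult[OF tmono_in_Lambda[OF assms] tmono_0_in_Lambda] act_tmono_scale[OF assms]
  by (simp add: skew_mult_tmono_tmono spow_dvd[OF assms(2)] mult.commute)

text \<open>a t^k \<equiv> (a u) t^k = a (u t^k) modulo (M).\<close>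
lemma act_tmono_one_mod:
  assumes "u \<in> BR_I \<sigma> H J k" "u - 1 \<in> M" "int n dvd k" "a \<in> BR_I \<sigma> H J k"
  shows "act (tmono k a) v = rm a (act (tmono k u) v)"
  using act_tmono_scale[OF assms(1,3), of a] act_tmono_scale[OF assms(4,3), of u] scale_one_mod[OF assms(2)]
  by (simp add: mult.commute)

lemma act_tmono_comp:
  assumes "a \<in> BR_I \<sigma> H J i" "int n dvd i" "b \<in> BR_I \<sigma> H J j" "int n dvd j"
  shows "act (tmono i a) (act (tmono j b) v) = act (tmono (i + j) (a * b)) v"
  using act_skew_mult[OF tmono_in_Lambda[OF assms(1,2)] tmono_in_Lambda[OF assms(3,4)]]
  by (simp add: skew_mult_tmono_tmono spow_dvd[OF assms(2)])

lemma exists_BR_I_one_mod: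
  assumes "k \<in> {int n, - int n}"
  shows "\<exists>u \<in> BR_I \<sigma> H J k. u - 1 \<in> M"
  using ideal_not_subset_maximal_one_mod[OF maximal is_ideal_BR_I, of \<sigma> H J k] assms not_subset_pos not_subset_neg
  by auto

theorem exists_theta: "\<exists>\<theta>. lin_aut rm \<theta> \<and> theta_acts \<sigma> H J n act rm \<theta>"
proof -
  obtain u where u: "u \<in> BR_I \<sigma> H J (int n)" "u - 1 \<in> M" using exists_BR_I_one_mod by blast
  obtain u' where u': "u' \<in> BR_I \<sigma> H J (- int n)" "u' - 1 \<in> M" using exists_BR_I_one_mod by blast
  define \<theta> where "\<theta> = act (tmono (int n) u)"
  define \<theta>' where "\<theta>' = act (tmono (- int n) u')"
  have "u * u' - 1 \<in> M" "u' * u - 1 \<in> M"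
    using is_ideal_one_mod_mult[OF maximal_ideal_is_ideal[OF maximal]] u(2) u'(2) by blast+
  then have inverse: "\<theta> (\<theta>' v) = v" "\<theta>' (\<theta> v) = v" for v
    using act_tmono_comp[OF u(1) _ u'(1)] act_tmono_comp[OF u'(1) _ u(1)]
    by (simp_all add: \<theta>_def \<theta>'_def scale_one_mod)
  then have "\<theta> \<circ> \<theta>' = id" "\<theta>' \<circ> \<theta> = id" by (simp_all add: fun_eq_iff)
  then have "bij \<theta>" "inv \<theta> = \<theta>'" by (simp_all add: o_bij inv_unique_comp)
  moreover have "\<theta> (v + w) = \<theta> v + \<theta> w" "\<theta> (rm r v) = rm r (\<theta> v)" for v w r
    using act_add[OF tmono_in_Lambda[OF u(1)]] act_tmono_commute[OF u(1)] by (simp_all add: \<theta>_def)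
  ultimately show ?thesis
    using act_tmono_one_mod[OF u(1,2)] act_tmono_one_mod[OF u'(1,2)]
    by (intro exI[of _ \<theta>]) (simp add: lin_aut_def theta_acts_def \<theta>_def \<theta>'_def)
qed

end

locale theta_module = Lambda_quotient_module \<sigma> n H J M act
  for \<sigma> :: "'a::comm_ring_1 \<Rightarrow> 'a" and n H J M and act :: "(int \<Rightarrow> 'a) \<Rightarrow> 'v::ab_group_add \<Rightarrow> 'v" +
  fixes \<theta> :: "'v \<Rightarrow> 'v"
  assumes lin: "lin_aut rm \<theta>" and acts: "theta_acts \<sigma> H J n act rm \<theta>"
begin

lemma theta_eq_act_one_mod:
  assumes "u \<in> BR_I \<sigma> H J (int n)" "u - 1 \<in> M"
  shows "\<theta> v = act (tmono (int n) u) v"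
  using acts assms scale_one_mod by (simp add: theta_acts_def)

lemma inv_theta_eq_act_one_mod:
  assumes "u \<in> BR_I \<sigma> H J (- int n)" "u - 1 \<in> M"
  shows "inv \<theta> v = act (tmono (- int n) u) v"
  using acts assms scale_one_mod by (simp add: theta_acts_def)

text \<open>a t^(s+k) \<equiv> (u a) t^(s+k) = (u t^s)(a t^k) modulo (M), as t^s is central.\<close>
lemma act_tmono_step:
  assumes u: "u \<in> BR_I \<sigma> H J s" "u - 1 \<in> M" "int n dvd s"
    and a: "a \<in> BR_I \<sigma> H J (s + k)" "a \<in> BR_I \<sigma> H J k" "int n dvd k"
  shows "act (tmono (s + k) a) v = act (tmono s u) (act (tmono k a) v)"
  using act_tmono_comp[OF u(1,3) a(2,3)] act_tmono_scale[OF a(1), of u] u(3) a(3) scale_one_mod[OF u(2)]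
  by simp

lemma act_tmono_pos:
  "a \<in> BR_I \<sigma> H J (int (p * n)) \<Longrightarrow> act (tmono (int (p * n)) a) v = rm a ((\<theta> ^^ p) v)"
proof (induction p arbitrary: a)
  case (Suc p)
  obtain u where u: "u \<in> BR_I \<sigma> H J (int n)" "u - 1 \<in> M" using exists_BR_I_one_mod by blast
  have "a \<in> BR_I \<sigma> H J (int (p * n))"
    using Suc.prems Ipos_antimono[of "p * n" "Suc p * n" \<sigma> J] unfolding BR_I_of_nat by auto
  then show ?case
    using act_tmono_step[OF u _ Suc.prems[unfolded add_mult_distrib of_nat_add mult_Suc]]
      Suc.IH theta_eq_act_one_mod[OF u] lin_autD(3)[OF lin]
    by (simp add: add_mult_distrib)
qed simp

lemma act_tmono_neg:
  "a \<in> BR_I \<sigma> H J (- int (p * n)) \<Longrightarrow> act (tmono (- int (p * n)) a) v = rm a ((inv \<theta> ^^ p) v)"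
proof (induction p arbitrary: a)
  case (Suc p)
  obtain u where u: "u \<in> BR_I \<sigma> H J (- int n)" "u - 1 \<in> M" using exists_BR_I_one_mod by blast
  have "a \<in> BR_I \<sigma> H J (- int (p * n))"
    using Suc.prems Ineg_antimono[of "p * n" "Suc p * n" \<sigma> H] unfolding BR_I_uminus_of_nat by auto
  then show ?case
    using act_tmono_step[OF u, of a "- int (p * n)"] Suc.prems
      Suc.IH inv_theta_eq_act_one_mod[OF u] lin_autD(3)[OF lin_aut_inv[OF lin]]
    by (simp add: add_mult_distrib)
qed simp

lemma act_tmono_theta:
  assumes "a \<in> BR_I \<sigma> H J k" "int n dvd k"
  shows "act (tmono k a) v = rm a (spow \<theta> (k div int n) v)"
proof -
  obtain q where k: "k = q * int n" using assms(2) by (metis dvdE mult.commute)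
  then have q: "k div int n = q" using n_pos by simp
  show ?thesis
  proof (cases "0 \<le> q")
    case True
    then have "k = int (nat q * n)" using k by simp
    then show ?thesis using act_tmono_pos[of a "nat q"] assms(1) q True by (simp add: spow_def)
  next
    case False
    then have "k = - int (nat (- q) * n)" using k by simp
    then show ?thesis using act_tmono_neg[of a "nat (- q)"] assms(1) q False by (simp add: spow_def)
  qed
qed

lemma act_eq_theta_action:
  assumes "f \<in> \<Lambda>"
  shows "act f v = theta_action rm \<theta> n f v"
proof -
  have main: "act f v = theta_action rm \<theta> n f v" if "finite F" "f \<in> \<Lambda>" "{k. f k \<noteq> 0} = F" for F f
    using that
  proof (induction F arbitrary: f rule: finite_induct)
    case empty
    then have "f = (\<lambda>_. 0)" by auto
    then show ?case using act_ext_ideal[OF ext_ideal.zero] by (simp add: theta_action_def)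
  next
    case (insert k F)
    define g where "g = f(k := 0)"
    have "f k \<noteq> 0" using insert.prems by auto
    then have fk: "f k \<in> BR_I \<sigma> H J k" "int n dvd k" using LambdaD(2,3)[OF insert.prems(1)] by auto
    have gF: "{j. g j \<noteq> 0} = F" using insert.prems(2) insert.hyps(2) by (auto simp: g_def)
    then have "finsupp g" using insert.hyps(1) by (simp add: finsupp_def)
    then have g: "g \<in> \<Lambda>" "{j. g j \<noteq> 0} = F"
      using insert.prems(1) is_idealD(1)[OF is_ideal_BR_I] gF by (auto simp: Lambda_def g_def)
    have f: "f = skew_add (tmono k (f k)) g" by (auto simp: skew_add_def tmono_def g_def)
    have "finsupp (tmono k (f k))" "finsupp g"
      using LambdaD(1)[OF g(1)] LambdaD(1)[OF tmono_in_Lambda[OF fk]] by (simp_all add: finsupp_def)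
    then show ?case
      using act_skew_add[OF tmono_in_Lambda[OF fk] g(1)] insert.IH[OF g] act_tmono_theta[OF fk]
        theta_action_skew_add[of "tmono k (f k)" g] f
      by (simp add: theta_action_tmono)
  qed
  show ?thesis by (rule main[OF LambdaD(1)[OF assms] assms refl])
qed

theorem submodule_iff_bistable:
  "submodule \<sigma> H J n act W \<longleftrightarrow> subspace rm W \<and> \<theta> ` W \<subseteq> W \<and> inv \<theta> ` W \<subseteq> W"
proof
  assume W: "submodule \<sigma> H J n act W"
  obtain u where u: "u \<in> BR_I \<sigma> H J (int n)" "u - 1 \<in> M" using exists_BR_I_one_mod by blast
  obtain u' where u': "u' \<in> BR_I \<sigma> H J (- int n)" "u' - 1 \<in> M" using exists_BR_I_one_mod by blast
  have closed: "act f v \<in> W" if "f \<in> \<Lambda>" "v \<in> W" for f v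
    using W that by (simp add: submodule_def)
  have dvd: "int n dvd int n" "int n dvd - int n" by simp_all
  have "subspace rm W" using W closed[OF tmono_0_in_Lambda] unfolding submodule_def subspace_def by blast
  moreover have "\<theta> ` W \<subseteq> W"
    using closed[OF tmono_in_Lambda[OF u(1) dvd(1)]] theta_eq_act_one_mod[OF u] by auto
  moreover have "inv \<theta> ` W \<subseteq> W"
    using closed[OF tmono_in_Lambda[OF u'(1) dvd(2)]] inv_theta_eq_act_one_mod[OF u'] by auto
  ultimately show "subspace rm W \<and> \<theta> ` W \<subseteq> W \<and> inv \<theta> ` W \<subseteq> W" by blast
next
  assume W: "subspace rm W \<and> \<theta> ` W \<subseteq> W \<and> inv \<theta> ` W \<subseteq> W"
  then have powers: "spow \<theta> k v \<in> W" if "v \<in> W" for k v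
    using spow_image_subset[of \<theta> W k] that by blast
  have "act f v \<in> W" if "f \<in> \<Lambda>" "v \<in> W" for f v
    unfolding act_eq_theta_action[OF that(1)] theta_action_def
    using W powers[OF that(2)] by (intro subspace_sum[of rm]) (simp_all add: subspace_def)
  then show "submodule \<sigma> H J n act W"
    using W by (simp add: submodule_def subspace_def)
qed

sublocale theta_space M rm \<theta>
  by unfold_locales (rule maximal, rule lin)

theorem simple_module_iff:
  "simple_module \<sigma> H J n act \<longleftrightarrow>
     (\<exists>v::'v. v \<noteq> 0) \<and> (\<forall>W. subspace rm W \<and> \<theta> ` W \<subseteq> W \<longrightarrow> W = {0} \<or> W = UNIV)"
  unfolding simple_module_def submodule_iff_bistable invariant_subspaces_trivial_iff by blast

end

theorem lemma3p14:
  fixes \<iota> :: "'k::field \<Rightarrow> 'a::idom"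
    and \<sigma> :: "'a \<Rightarrow> 'a"
    and H J :: "'a set"
    and n :: nat
    and \<O> :: "'a set set"
    and M :: "'a set"
  assumes kalg: "ring_hom_map \<iota>"
    and aut: "ring_aut \<sigma>"
    and klin: "\<forall>c. \<sigma> (\<iota> c) = \<iota> c"
    and H: "is_ideal H" and J: "is_ideal J"
    and nonzero: "\<forall>k. BR_I \<sigma> H J k \<noteq> {0}"
    and npos: "0 < n"
    and period: "\<sigma> ^^ n = id"
    and orbit: "\<exists>M0. maximal_ideal M0 \<and> \<O> = sigma_orbit \<sigma> M0"
    and size: "card \<O> = n"
    and nobreak: "\<forall>P\<in>\<O>. \<not> is_break \<sigma> H J P"
    and MO: "M \<in> \<O>"
  shows
    "(\<forall>act :: (int \<Rightarrow> 'a) \<Rightarrow> 'v::ab_group_add \<Rightarrow> 'v.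
        quot_module \<sigma> H J n M act \<longrightarrow>
        (\<exists>\<theta>. lin_aut (\<lambda>r. act (tmono 0 r)) \<theta> \<and>
              theta_acts \<sigma> H J n act (\<lambda>r. act (tmono 0 r)) \<theta>))
   \<and> (\<forall>(rmul :: 'a \<Rightarrow> 'v \<Rightarrow> 'v) \<theta>.
        RM_space M rmul \<and> lin_aut rmul \<theta> \<longrightarrow>
        (\<exists>act. quot_module \<sigma> H J n M act \<and> (\<forall>r v. act (tmono 0 r) v = rmul r v) \<and>
               theta_acts \<sigma> H J n act rmul \<theta>))
   \<and> (\<forall>(act :: (int \<Rightarrow> 'a) \<Rightarrow> 'v \<Rightarrow> 'v) \<theta>.
        quot_module \<sigma> H J n M act \<and> lin_aut (\<lambda>r. act (tmono 0 r)) \<theta> \<and>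
        theta_acts \<sigma> H J n act (\<lambda>r. act (tmono 0 r)) \<theta> \<longrightarrow>
        (simple_module \<sigma> H J n act \<longleftrightarrow>
          (\<exists>v::'v. v \<noteq> 0) \<and>
          (\<forall>W. subspace (\<lambda>r. act (tmono 0 r)) W \<and> \<theta> ` W \<subseteq> W \<longrightarrow> W = {0} \<or> W = UNIV)))"
proof -
  obtain M0 where M0: "maximal_ideal M0" "\<O> = sigma_orbit \<sigma> M0" using orbit by blast
  note M = BR_I_not_subset_no_break_orbit[OF aut npos period M0(1) nobreak[unfolded M0(2)] MO[unfolded M0(2)]]
  interpret periodic_aut \<sigma> n by unfold_locales (rule npos, rule period)
  show ?thesis
  proof (intro conjI allI impI)
    fix act :: "(int \<Rightarrow> 'a) \<Rightarrow> 'v \<Rightarrow> 'v"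
    assume "quot_module \<sigma> H J n M act"
    then interpret Lambda_quotient_module \<sigma> n H J M act by unfold_locales (use M in auto)
    show "\<exists>\<theta>. lin_aut rm \<theta> \<and> theta_acts \<sigma> H J n act rm \<theta>" by (rule exists_theta)
  next
    fix rmul :: "'a \<Rightarrow> 'v \<Rightarrow> 'v" and \<theta>
    assume "RM_space M rmul \<and> lin_aut rmul \<theta>"
    then interpret theta_construction \<sigma> n M rmul \<theta> by unfold_locales auto
    show "\<exists>act. quot_module \<sigma> H J n M act \<and> (\<forall>r v. act (tmono 0 r) v = rmul r v) \<and> theta_acts \<sigma> H J n act rmul \<theta>"
      using theta_action_quot_module by blast
  next
    fix act :: "(int \<Rightarrow> 'a) \<Rightarrow> 'v \<Rightarrow> 'v" and \<theta>
    assume "quot_module \<sigma> H J n M act \<and> lin_aut (\<lambda>r. act (tmono 0 r)) \<theta> \<and> theta_acts \<sigma> H J n act (\<lambda>r. act (tmono 0 r)) \<theta>"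
    then interpret theta_module \<sigma> n H J M act \<theta> by unfold_locales (use M in auto)
    show "simple_module \<sigma> H J n act \<longleftrightarrow>
        (\<exists>v::'v. v \<noteq> 0) \<and> (\<forall>W. subspace rm W \<and> \<theta> ` W \<subseteq> W \<longrightarrow> W = {0} \<or> W = UNIV)"
      by (rule simple_module_iff)
  qed
qed

end
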